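(* There are exactly $15$ complete number-conserving $3$-state $3$-neighbor vector-valued fuzzy cellular automaton rules, i.e. exactly 15 local rules $f$ for which $\nu^t(k)$ is an additive conserved quantity for every $k=1,2,3$. Their local rules $f(\bm{x},\bm{y},\bm{z})$ are: $(y_1,y_2,y_3)^\top$; $(z_1,z_2,z_3)^\top$; $(x_1,x_2,x_3)^\top$; $(x_1y_2+y_1z_1+y_1z_3,\ x_2y_2+x_3y_2+y_1z_2,\ y_3)^\top$; $(x_1y_3+y_1z_1+y_1z_2,\ y_2,\ x_2y_3+x_3y_3+y_1z_3)^\top$; $(y_1,\ x_2y_3+y_2z_1+y_2z_2,\ x_1y_3+x_3y_3+y_2z_3)^\top$; $(y_1,\ x_1y_2+x_2y_2+y_3z_2,\ x_3y_2+y_3z_1+y_3z_3)^\top$; $(x_1y_1+x_2y_1+y_3z_1,\ y_2,\ x_3y_1+y_3z_2+y_3z_3)^\top$; $(x_1y_1+x_3y_1+y_2z_1,\ x_2y_1+y_2z_2+y_2z_3,\ y_3)^\top$; $(x_1y_2+x_1y_3+y_1z_1,\ x_2y_2+x_3y_2+y_1z_2,\ x_2y_3+x_3y_3+y_1z_3)^\top$; $(x_1y_2+y_1z_1+y_1z_3,\ x_2y_2+y_1z_2+y_3z_2,\ x_3y_2+y_3z_1+y_3z_3)^\top$; $(x_1y_3+y_1z_1+y_1z_2,\ x_2y_3+y_2z_1+y_2z_2,\ x_3y_3+y_1z_3+y_2z_3)^\top$; $(x_1y_1+x_2y_1+y_3z_1,\ x_1y_2+x_2y_2+y_3z_2,\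 x_3y_1+x_3y_2+y_3z_3)^\top$; $(x_1y_1+x_3y_1+y_2z_1,\ x_2y_1+x_2y_3+y_2z_2,\ x_1y_3+x_3y_3+y_2z_3)^\top$; $(x_1y_1+y_2z_1+y_3z_1,\ x_2y_1+y_2z_2+y_2z_3,\ x_3y_1+y_3z_2+y_3z_3)^\top$.
   Context: Let $\bm{e}_1,\bm{e}_2,\bm{e}_3$ be the standard basis of $\mathbb{R}^3$ and $\Delta=\{(x_1,x_2,x_3)^{\top}\mid x_1+x_2+x_3=1,\ x_i\ge0\}$. A $3$-state $3$-neighbor vector-valued fuzzy cellular automaton ($3$-VFCA) has cells $i\in\mathbb{Z}$ with states $\bm{x}_i^t\in\Delta$, $t\in\mathbb{Z}_{\ge0}$, evolving by $\bm{x}_i^{t+1}=f(\bm{x}_{i-1}^t,\bm{x}_i^t,\bm{x}_{i+1}^t)$, where the local rule has the form $f(\bm{x},\bm{y},\bm{z})=\sum_{j,k,\ell=1}^3x_jy_kz_\ell\,h(\bm{e}_j,\bm{e}_k,\bm{e}_\ell)$ for some map $h:\{\bm{e}_1,\bm{e}_2,\bm{e}_3\}^3\to\{\bm{e}_1,\bm{e}_2,\bm{e}_3\}$ (so rules are in bijection with such $h$; here $\bm{x}=(x_1,x_2,x_3)^\top$ etc.). Consider $L$-periodic configurations ($\bm{x}_i^t=\bm{x}_{i+L}^t$, $L$ a positive integer) and $\nu^t(k)=\sum_{i=1}^L[\bm{x}_i^t]_k$, where $[\bm{x}]_k$ is the $k$th entry. $\nu^t(k)$ is an additive conserved quantity if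 $\nu^{t+1}(k)=\nu^t(k)$ for all $t$ and every periodic initial configuration in $\Delta$ (of every period $L$). A rule is complete number-conserving if this holds for all $k=1,2,3$. *)

theory Defs
  imports Complex_Main
begin

text \<open>The three states; a state vector is a function st => real, entry k being [x]_k.\<close>
datatype st = S1 | S2 | S3

lemma UNIV_st: "(UNIV :: st set) = {S1, S2, S3}"
  using st.exhaust by auto

instance st :: finite
  by standard (simp add: UNIV_st)

type_synonym vec = "st \<Rightarrow> real"

definition Delta :: "vec set" where
  "Delta = {x. (\<forall>k. 0 \<le> x k) \<and> (\<Sum>k\<in>UNIV. x k) = 1}"

text \<open>Local rule induced by h : {e1,e2,e3}^3 -> {e1,e2,e3}
  (h is encoded on indices: h j k l = m means h(e_j,e_k,e_l) = e_m).\<close>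
definition local_rule :: "(st \<Rightarrow> st \<Rightarrow> st \<Rightarrow> st) \<Rightarrow> vec \<Rightarrow> vec \<Rightarrow> vec \<Rightarrow> vec" where
  "local_rule h x y z = (\<lambda>m. \<Sum>j\<in>UNIV. \<Sum>k\<in>UNIV. \<Sum>l\<in>UNIV.
      x j * y k * z l * (if h j k l = m then 1 else 0))"

definition step :: "(st \<Rightarrow> st \<Rightarrow> st \<Rightarrow> st) \<Rightarrow> (int \<Rightarrow> vec) \<Rightarrow> (int \<Rightarrow> vec)" where
  "step h c = (\<lambda>i. local_rule h (c (i - 1)) (c i) (c (i + 1)))"

definition evol :: "(st \<Rightarrow> st \<Rightarrow> st \<Rightarrow> st) \<Rightarrow> (int \<Rightarrow> vec) \<Rightarrow> nat \<Rightarrow> (int \<Rightarrow> vec)" where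
  "evol h c t = (step h ^^ t) c"

definition nu :: "nat \<Rightarrow> (int \<Rightarrow> vec) \<Rightarrow> st \<Rightarrow> real" where
  "nu L c k = (\<Sum>i\<in>{1..int L}. c i k)"

definition additive_conserved :: "(st \<Rightarrow> st \<Rightarrow> st \<Rightarrow> st) \<Rightarrow> st \<Rightarrow> bool" where
  "additive_conserved h k \<longleftrightarrow>
     (\<forall>L::nat. L > 0 \<longrightarrow> (\<forall>c. (\<forall>i. c i \<in> Delta) \<and> (\<forall>i. c (i + int L) = c i) \<longrightarrow>
        (\<forall>t. nu L (evol h c (Suc t)) k = nu L (evol h c t) k)))"

definition complete_nc :: "(st \<Rightarrow> st \<Rightarrow> st \<Rightarrow> st) \<Rightarrow> bool" where
  "complete_nc h \<longleftrightarrow> (\<forall>k. additive_conserved h k)"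

definition vec3 :: "real \<Rightarrow> real \<Rightarrow> real \<Rightarrow> vec" where
  "vec3 a b c = (\<lambda>s. case s of S1 \<Rightarrow> a | S2 \<Rightarrow> b | S3 \<Rightarrow> c)"

definition listed_rules :: "(vec \<Rightarrow> vec \<Rightarrow> vec \<Rightarrow> vec) list" where
  "listed_rules = [
   (\<lambda>x y z. vec3 (y S1) (y S2) (y S3)),
   (\<lambda>x y z. vec3 (z S1) (z S2) (z S3)),
   (\<lambda>x y z. vec3 (x S1) (x S2) (x S3)),
   (\<lambda>x y z. vec3 (x S1*y S2 + y S1*z S1 + y S1*z S3) (x S2*y S2 + x S3*y S2 + y S1*z S2) (y S3)),
   (\<lambda>x y z. vec3 (x S1*y S3 + y S1*z S1 + y S1*z S2) (y S2) (x S2*y S3 + x S3*y S3 + y S1*z S3)),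
   (\<lambda>x y z. vec3 (y S1) (x S2*y S3 + y S2*z S1 + y S2*z S2) (x S1*y S3 + x S3*y S3 + y S2*z S3)),
   (\<lambda>x y z. vec3 (y S1) (x S1*y S2 + x S2*y S2 + y S3*z S2) (x S3*y S2 + y S3*z S1 + y S3*z S3)),
   (\<lambda>x y z. vec3 (x S1*y S1 + x S2*y S1 + y S3*z S1) (y S2) (x S3*y S1 + y S3*z S2 + y S3*z S3)),
   (\<lambda>x y z. vec3 (x S1*y S1 + x S3*y S1 + y S2*z S1) (x S2*y S1 + y S2*z S2 + y S2*z S3) (y S3)),
   (\<lambda>x y z. vec3 (x S1*y S2 + x S1*y S3 + y S1*z S1) (x S2*y S2 + x S3*y S2 + y S1*z S2) (x S2*y S3 + x S3*y S3 + y S1*z S3)),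
   (\<lambda>x y z. vec3 (x S1*y S2 + y S1*z S1 + y S1*z S3) (x S2*y S2 + y S1*z S2 + y S3*z S2) (x S3*y S2 + y S3*z S1 + y S3*z S3)),
   (\<lambda>x y z. vec3 (x S1*y S3 + y S1*z S1 + y S1*z S2) (x S2*y S3 + y S2*z S1 + y S2*z S2) (x S3*y S3 + y S1*z S3 + y S2*z S3)),
   (\<lambda>x y z. vec3 (x S1*y S1 + x S2*y S1 + y S3*z S1) (x S1*y S2 + x S2*y S2 + y S3*z S2) (x S3*y S1 + x S3*y S2 + y S3*z S3)),
   (\<lambda>x y z. vec3 (x S1*y S1 + x S3*y S1 + y S2*z S1) (x S2*y S1 + x S2*y S3 + y S2*z S2) (x S1*y S3 + x S3*y S3 + y S2*z S3)),
   (\<lambda>x y z. vec3 (x S1*y S1 + y S2*z S1 + y S3*z S1) (x S2*y S1 + y S2*z S2 + y S2*z S3) (x S3*y S1 + y S3*z S2 + y S3*z S3))]"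

text \<open>Two rules are the same rule iff they agree on Delta^3 (their domain).\<close>
definition same_on_Delta :: "(vec \<Rightarrow> vec \<Rightarrow> vec \<Rightarrow> vec) \<Rightarrow> (vec \<Rightarrow> vec \<Rightarrow> vec \<Rightarrow> vec) \<Rightarrow> bool" where
  "same_on_Delta f g \<longleftrightarrow> (\<forall>x\<in>Delta. \<forall>y\<in>Delta. \<forall>z\<in>Delta. f x y z = g x y z)"

end

theory Submission
  imports Defs
begin

text \<open>
  If the local change of the k-th indicator is a difference of a flux,
  of_bool (h a b c = k) - of_bool (b = k) = f a b - f b c, then by multilinearity the same holds for
  the local rule on the simplex with the expected flux, and the change of nu over one period
  telescopes to zero. Conversely, a periodic configuration of unit vectors is a cyclic word w, one
  step maps it to the word of images of its windows, and conservation says that both words have the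
  same letter counts. Imposing this on all cyclic words of length at most 4 leaves 15 of the 3^27
  tables for h; each of them admits a flux, and their multilinear extensions are the listed rules.
\<close>

definition unit_vec :: "st \<Rightarrow> vec" where
  "unit_vec s = (\<lambda>k. of_bool (k = s))"

lemma unit_vec_in_Delta: "unit_vec s \<in> Delta"
  by (cases s) (auto simp: Delta_def unit_vec_def UNIV_st)

lemma sum_unit_vec_mult: "(\<Sum>j\<in>UNIV. unit_vec a j * f j) = (f a :: real)"
  by (cases a) (simp_all add: UNIV_st unit_vec_def)

lemma local_rule_unit_vec:
  "local_rule h (unit_vec a) (unit_vec b) (unit_vec c) = unit_vec (h a b c)"
  by (simp add: local_rule_def mult.assoc sum_unit_vec_mult flip: sum_distrib_left)
     (simp add: unit_vec_def fun_eq_iff)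

lemma local_rule_in_Delta:
  assumes x: "x \<in> Delta" and y: "y \<in> Delta" and z: "z \<in> Delta"
  shows "local_rule h x y z \<in> Delta"
proof -
  have "(\<Sum>m\<in>UNIV. local_rule h x y z m)
      = (\<Sum>j\<in>UNIV. \<Sum>k\<in>UNIV. \<Sum>l\<in>UNIV. \<Sum>m\<in>UNIV. x j * y k * z l * (if h j k l = m then 1 else 0))"
    unfolding local_rule_def
    by (subst sum.swap, rule sum.cong[OF refl], subst sum.swap, rule sum.cong[OF refl], rule sum.swap)
  also have "\<dots> = (\<Sum>j\<in>UNIV. x j) * (\<Sum>k\<in>UNIV. y k) * (\<Sum>l\<in>UNIV. z l)"
    by (simp flip: sum_distrib_left sum_distrib_right)
  finally show ?thesis
    using assms by (auto simp: Delta_def local_rule_def intro!: sum_nonneg)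
qed

definition periodic_config :: "nat \<Rightarrow> (int \<Rightarrow> vec) \<Rightarrow> bool" where
  "periodic_config L c \<longleftrightarrow> (\<forall>i. c i \<in> Delta) \<and> (\<forall>i. c (i + int L) = c i)"

lemma periodic_config_step:
  assumes "periodic_config L c"
  shows "periodic_config L (step h c)"
proof -
  from assms have in_Delta: "c i \<in> Delta" and per: "c (i + int L) = c i" for i
    by (simp_all add: periodic_config_def)
  have "c (i + int L - 1) = c (i - 1)" "c (i + int L + 1) = c (i + 1)" for i
    using per[of "i - 1"] per[of "i + 1"] by (simp_all add: algebra_simps)
  then show ?thesis
    by (simp add: periodic_config_def step_def in_Delta local_rule_in_Delta per)
qed

lemma evol_Suc: "evol h c (Suc t) = step h (evol h c t)"
  by (simp add: evol_def)

lemma periodic_config_evol: "periodic_config L c \<Longrightarrow> periodic_config L (evol h c t)"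
  by (induction t) (simp_all add: evol_def periodic_config_step)

lemma additive_conserved_iff_step:
  "additive_conserved h k \<longleftrightarrow>
     (\<forall>L>0. \<forall>c. periodic_config L c \<longrightarrow> nu L (step h c) k = nu L c k)"
  (is "_ \<longleftrightarrow> ?one_step")
proof
  assume "additive_conserved h k"
  then have "nu L (evol h c (Suc 0)) k = nu L (evol h c 0) k" if "L > 0" "periodic_config L c" for L c
    using that by (simp add: additive_conserved_def periodic_config_def)
  then show ?one_step
    by (simp add: evol_def)
next
  assume one_step: ?one_step
  show "additive_conserved h k"
    unfolding additive_conserved_def
  proof (intro allI impI)
    fix L :: nat and c t
    assume "L > 0" and "(\<forall>i. c i \<in> Delta) \<and> (\<forall>i. c (i + int L) = c i)"
    then have "periodic_config L (evol h c t)"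
      using periodic_config_evol[of L c h t] by (simp add: periodic_config_def)
    with one_step \<open>L > 0\<close> show "nu L (evol h c (Suc t)) k = nu L (evol h c t) k"
      by (simp add: evol_Suc)
  qed
qed

lemma nu_eq_sum_lessThan: "nu L c k = (\<Sum>j<L. c (int j + 1) k)"
proof -
  have "{1..int L} = int ` {1..L}"
    by (simp add: image_int_atLeastAtMost)
  then have "nu L c k = (\<Sum>j\<in>{1..L}. c (int j) k)"
    by (simp add: nu_def sum.reindex)
  then show ?thesis
    by (simp add: sum.atLeast1_atMost_eq add.commute)
qed

definition expected_flux :: "(st \<Rightarrow> st \<Rightarrow> real) \<Rightarrow> vec \<Rightarrow> vec \<Rightarrow> real" where
  "expected_flux f x y = (\<Sum>a\<in>UNIV. \<Sum>b\<in>UNIV. x a * y b * f a b)"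

lemma local_rule_flux_form:
  fixes f :: "st \<Rightarrow> st \<Rightarrow> real"
  assumes flux: "\<And>a b c. of_bool (h a b c = k) = of_bool (b = k) + f a b - f b c"
    and x: "x \<in> Delta" and y: "y \<in> Delta" and z: "z \<in> Delta"
  shows "local_rule h x y z k = y k + expected_flux f x y - expected_flux f y z"
proof -
  have sx: "(\<Sum>a\<in>UNIV. x a) = 1" and sz: "(\<Sum>c\<in>UNIV. z c) = 1"
    using x z by (simp_all add: Delta_def)
  define g where "g b = (\<Sum>c\<in>UNIV. z c * f b c)" for b
  have "local_rule h x y z k
      = (\<Sum>a\<in>UNIV. \<Sum>b\<in>UNIV. x a * y b * (\<Sum>c\<in>UNIV. z c * (of_bool (b = k) + f a b - f b c)))"
    unfolding local_rule_def of_bool_def[symmetric] flux by (simp add: sum_distrib_left mult.assoc)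
  also have "\<dots> = (\<Sum>a\<in>UNIV. \<Sum>b\<in>UNIV. x a * y b * (of_bool (b = k) + f a b - g b))"
    by (simp add: g_def right_diff_distrib distrib_left sum.distrib sum_subtractf sz
        flip: sum_distrib_right)
  also have "\<dots> = y k + expected_flux f x y - (\<Sum>b\<in>UNIV. y b * g b)"
    by (simp add: expected_flux_def right_diff_distrib distrib_left sum.distrib sum_subtractf sx
        sum_unit_vec_mult[of k, unfolded unit_vec_def] mult.assoc flip: sum_distrib_left sum_distrib_right)
  also have "(\<Sum>b\<in>UNIV. y b * g b) = expected_flux f y z"
    by (simp add: g_def expected_flux_def sum_distrib_left mult.assoc)
  finally show ?thesis .
qed

lemma additive_conserved_if_flux:
  fixes f :: "st \<Rightarrow> st \<Rightarrow> real"
  assumes flux: "\<And>a b c. of_bool (h a b c = k) = of_bool (b = k) + f a b - f b c"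
  shows "additive_conserved h k"
  unfolding additive_conserved_iff_step
proof (intro allI impI)
  fix L :: nat and c
  assume "periodic_config L c"
  then have in_Delta: "c i \<in> Delta" and per: "c (i + int L) = c i" for i
    by (simp_all add: periodic_config_def)
  define G where "G j = expected_flux f (c (int j)) (c (int j + 1))" for j
  have "nu L (step h c) k = (\<Sum>j<L. c (int j + 1) k + (G j - G (Suc j)))"
    unfolding nu_eq_sum_lessThan step_def G_def
    by (simp add: local_rule_flux_form[OF flux] in_Delta add.commute add_diff_eq)
  also have "\<dots> = nu L c k + (G 0 - G L)"
    by (simp only: sum.distrib sum_lessThan_telescope' nu_eq_sum_lessThan)
  also have "G L = G 0"
    using per[of 0] per[of 1] by (simp add: G_def add.commute)
  finally show "nu L (step h c) k = nu L c k"
    by simp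
qed

definition cyclic_image :: "(st \<Rightarrow> st \<Rightarrow> st \<Rightarrow> st) \<Rightarrow> st list \<Rightarrow> st list" where
  "cyclic_image h w = map (\<lambda>j. h (w ! ((j + length w - 1) mod length w)) (w ! j) (w ! ((j + 1) mod length w)))
     [0..<length w]"

lemma cyclic_image_1: "cyclic_image h [a] = [h a a a]"
  and cyclic_image_2: "cyclic_image h [a, b] = [h b a b, h a b a]"
  and cyclic_image_3: "cyclic_image h [a, b, c] = [h c a b, h a b c, h b c a]"
  and cyclic_image_4: "cyclic_image h [a, b, c, d] = [h d a b, h a b c, h b c d, h c d a]"
  by (simp_all add: cyclic_image_def upt_rec)

text \<open>The period starts at cell 1, matching the range of \<^const>\<open>nu\<close>.\<close>
definition word_config :: "st list \<Rightarrow> int \<Rightarrow> vec" where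
  "word_config w i = unit_vec (w ! nat ((i - 1) mod int (length w)))"

lemma periodic_config_word_config: "periodic_config (length w) (word_config w)"
  by (simp add: periodic_config_def word_config_def unit_vec_in_Delta flip: diff_add_eq)

lemma word_config_at: "j < length w \<Longrightarrow> word_config w (int j + 1) = unit_vec (w ! j)"
  by (simp add: word_config_def)

lemma step_word_config:
  assumes j: "j < length w"
  shows "step h (word_config w) (int j + 1) = unit_vec (cyclic_image h w ! j)"
proof -
  let ?L = "length w"
  have "int ((j + ?L - 1) mod ?L) = (int j - 1 + int ?L) mod int ?L"
    using j by (simp add: zmod_int of_nat_diff algebra_simps)
  also have "\<dots> = (int j - 1) mod int ?L"
    by (rule mod_add_self2)
  finally have left_index: "nat ((int j - 1) mod int ?L) = (j + ?L - 1) mod ?L"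
    by simp
  have "int ((j + 1) mod ?L) = (int j + 1) mod int ?L"
    by (simp add: zmod_int add.commute)
  then have right_index: "nat ((int j + 1) mod int ?L) = (j + 1) mod ?L"
    by simp
  show ?thesis
    using j by (simp add: step_def word_config_def left_index right_index local_rule_unit_vec cyclic_image_def)
qed

lemma real_count_list: "real (count_list u k) = (\<Sum>j<length u. of_bool (u ! j = k))"
proof -
  have "real (count_list u k) = sum_list (map (\<lambda>x. of_bool (x = k)) u)"
    by (induction u) simp_all
  then show ?thesis
    by (simp add: sum_list_sum_nth atLeast0LessThan)
qed

lemma nu_eq_count_list:
  assumes "\<And>j. j < length u \<Longrightarrow> c (int j + 1) = unit_vec (u ! j)"
  shows "nu (length u) c k = real (count_list u k)"
  using assms by (simp add: nu_eq_sum_lessThan real_count_list unit_vec_def eq_commute)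

lemma count_list_cyclic_image:
  assumes "additive_conserved h k" and "w \<noteq> []"
  shows "count_list (cyclic_image h w) k = count_list w k"
proof -
  have "nu (length w) (step h (word_config w)) k = nu (length w) (word_config w) k"
    using assms periodic_config_word_config by (simp add: additive_conserved_iff_step)
  moreover have "nu (length w) (step h (word_config w)) k = real (count_list (cyclic_image h w) k)"
    using nu_eq_count_list[of "cyclic_image h w"] by (simp add: step_word_config cyclic_image_def)
  moreover have "nu (length w) (word_config w) k = real (count_list w k)"
    by (simp add: nu_eq_count_list word_config_at)
  ultimately show ?thesis
    by simp
qed

lemma all_st: "(\<forall>k. P k) \<longleftrightarrow> P S1 \<and> P S2 \<and> P S3"
  by (metis st.exhaust)

lemma count_list_Cons_of_bool: "count_list (x # xs) y = of_bool (x = y) + count_list xs y"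
  by simp

text \<open>One word from each rotation class of words of length 1 to 4.\<close>
definition short_necklaces :: "st list list" where
  "short_necklaces = [
    [S1], [S2], [S3],
    [S1, S1], [S1, S2], [S1, S3], [S2, S2], [S2, S3], [S3, S3],
    [S1, S1, S1], [S1, S1, S2], [S1, S1, S3], [S1, S2, S2], [S1, S2, S3], [S1, S3, S2],
    [S1, S3, S3], [S2, S2, S2], [S2, S2, S3], [S2, S3, S3], [S3, S3, S3],
    [S1, S1, S1, S1], [S1, S1, S1, S2], [S1, S1, S1, S3], [S1, S1, S2, S2], [S1, S1, S2, S3], [S1, S1, S3, S2],
    [S1, S1, S3, S3], [S1, S2, S1, S2], [S1, S2, S1, S3], [S1, S2, S2, S2], [S1, S2, S2, S3], [S1, S2, S3, S2],
    [S1, S2, S3, S3], [S1, S3, S1, S3], [S1, S3, S2, S2], [S1, S3, S2, S3], [S1, S3, S3, S2], [S1, S3, S3, S3],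
    [S2, S2, S2, S2], [S2, S2, S2, S3], [S2, S2, S3, S3], [S2, S3, S2, S3], [S2, S3, S3, S3], [S3, S3, S3, S3]]"

definition rule_table :: "(st \<Rightarrow> st \<Rightarrow> st \<Rightarrow> st) \<Rightarrow> st list" where
  "rule_table h = [h a b c. a \<leftarrow> [S1, S2, S3], b \<leftarrow> [S1, S2, S3], c \<leftarrow> [S1, S2, S3]]"

text \<open>In the order of \<^const>\<open>listed_rules\<close>.\<close>
definition nc_tables :: "st list list" where
  "nc_tables = [
    [S1, S1, S1, S2, S2, S2, S3, S3, S3, S1, S1, S1, S2, S2, S2, S3, S3, S3, S1, S1, S1, S2, S2, S2, S3, S3, S3],
    [S1, S2, S3, S1, S2, S3, S1, S2, S3, S1, S2, S3, S1, S2, S3, S1, S2, S3, S1, S2, S3, S1, S2, S3, S1, S2, S3],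
    [S1, S1, S1, S1, S1, S1, S1, S1, S1, S2, S2, S2, S2, S2, S2, S2, S2, S2, S3, S3, S3, S3, S3, S3, S3, S3, S3],
    [S1, S2, S1, S1, S1, S1, S3, S3, S3, S1, S2, S1, S2, S2, S2, S3, S3, S3, S1, S2, S1, S2, S2, S2, S3, S3, S3],
    [S1, S1, S3, S2, S2, S2, S1, S1, S1, S1, S1, S3, S2, S2, S2, S3, S3, S3, S1, S1, S3, S2, S2, S2, S3, S3, S3],
    [S1, S1, S1, S2, S2, S3, S3, S3, S3, S1, S1, S1, S2, S2, S3, S2, S2, S2, S1, S1, S1, S2, S2, S3, S3, S3, S3],
    [S1, S1, S1, S2, S2, S2, S3, S2, S3, S1, S1, S1, S2, S2, S2, S3, S2, S3, S1, S1, S1, S3, S3, S3, S3, S2, S3],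
    [S1, S1, S1, S2, S2, S2, S1, S3, S3, S1, S1, S1, S2, S2, S2, S1, S3, S3, S3, S3, S3, S2, S2, S2, S1, S3, S3],
    [S1, S1, S1, S1, S2, S2, S3, S3, S3, S2, S2, S2, S1, S2, S2, S3, S3, S3, S1, S1, S1, S1, S2, S2, S3, S3, S3],
    [S1, S2, S3, S1, S1, S1, S1, S1, S1, S1, S2, S3, S2, S2, S2, S3, S3, S3, S1, S2, S3, S2, S2, S2, S3, S3, S3],
    [S1, S2, S1, S1, S1, S1, S3, S2, S3, S1, S2, S1, S2, S2, S2, S3, S2, S3, S1, S2, S1, S3, S3, S3, S3, S2, S3],
    [S1, S1, S3, S2, S2, S3, S1, S1, S1, S1, S1, S3, S2, S2, S3, S2, S2, S2, S1, S1, S3, S2, S2, S3, S3, S3, S3],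
    [S1, S1, S1, S2, S2, S2, S1, S2, S3, S1, S1, S1, S2, S2, S2, S1, S2, S3, S3, S3, S3, S3, S3, S3, S1, S2, S3],
    [S1, S1, S1, S1, S2, S3, S3, S3, S3, S2, S2, S2, S1, S2, S3, S2, S2, S2, S1, S1, S1, S1, S2, S3, S3, S3, S3],
    [S1, S1, S1, S1, S2, S2, S1, S3, S3, S2, S2, S2, S1, S2, S2, S1, S3, S3, S3, S3, S3, S1, S2, S2, S1, S3, S3]]"

lemma rule_table_if_count_conserving:
  assumes "\<forall>w\<in>set short_necklaces. \<forall>k. count_list (cyclic_image h w) k = count_list w k"
  shows "rule_table h \<in> set nc_tables"
  \<comment> \<open>Branch on the 27 values of h, windows of the shortest necklaces first, simplifying with
      the count constraints after each split so that almost all branches close immediately.\<close>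
  using assms
  apply (simp add: short_necklaces_def cyclic_image_1 cyclic_image_2 cyclic_image_3 cyclic_image_4 all_st
      count_list_Cons_of_bool del: count_list.simps(2))
  apply (cases "h S1 S1 S1", simp_all)
  apply (case_tac [!] "h S2 S2 S2", simp_all)
  apply (case_tac [!] "h S3 S3 S3", simp_all)
  apply (case_tac [!] "h S1 S2 S1", simp_all)
  apply (case_tac [!] "h S2 S1 S2", simp_all)
  apply (case_tac [!] "h S1 S3 S1", simp_all)
  apply (case_tac [!] "h S3 S1 S3", simp_all)
  apply (case_tac [!] "h S2 S3 S2", simp_all)
  apply (case_tac [!] "h S3 S2 S3", simp_all)
  apply (case_tac [!] "h S1 S1 S2", simp_all)
  apply (case_tac [!] "h S2 S1 S1", simp_all)
  apply (case_tac [!] "h S1 S1 S3", simp_all)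
  apply (case_tac [!] "h S3 S1 S1", simp_all)
  apply (case_tac [!] "h S1 S2 S2", simp_all)
  apply (case_tac [!] "h S2 S2 S1", simp_all)
  apply (case_tac [!] "h S1 S2 S3", simp_all)
  apply (case_tac [!] "h S2 S3 S1", simp_all)
  apply (case_tac [!] "h S1 S3 S2", simp_all)
  apply (case_tac [!] "h S3 S2 S1", simp_all)
  apply (case_tac [!] "h S2 S1 S3", simp_all)
  apply (case_tac [!] "h S3 S1 S2", simp_all)
  apply (case_tac [!] "h S2 S2 S3", simp_all)
  apply (case_tac [!] "h S3 S2 S2", simp_all)
  apply (case_tac [!] "h S1 S3 S3", simp_all)
  apply (case_tac [!] "h S3 S3 S1", simp_all)
  apply (case_tac [!] "h S2 S3 S3", simp_all)
  apply (case_tac [!] "h S3 S3 S2", simp_all)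
  apply (simp_all add: rule_table_def nc_tables_def)
  done

definition st_index :: "st \<Rightarrow> nat" where
  "st_index s = (case s of S1 \<Rightarrow> 0 | S2 \<Rightarrow> 1 | S3 \<Rightarrow> 2)"

definition rule_of_table :: "st list \<Rightarrow> st \<Rightarrow> st \<Rightarrow> st \<Rightarrow> st" where
  "rule_of_table p a b c = p ! (9 * st_index a + 3 * st_index b + st_index c)"

lemma rule_of_table_rule_table: "rule_of_table (rule_table h) = h"
proof (intro ext)
  show "rule_of_table (rule_table h) a b c = h a b c" for a b c
    by (cases a; cases b; cases c) (simp_all add: rule_of_table_def rule_table_def st_index_def)
qed

lemma rule_table_rule_of_table: "\<forall>p\<in>set nc_tables. rule_table (rule_of_table p) = p"
  by (simp add: nc_tables_def rule_table_def rule_of_table_def st_index_def)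

text \<open>
  Any flux f with f S1 S1 = 0 is forced to be this one: read the flux condition on the windows
  (S1, S1, a) and (S1, a, b).\<close>
definition canonical_flux :: "(st \<Rightarrow> st \<Rightarrow> st \<Rightarrow> st) \<Rightarrow> st \<Rightarrow> st \<Rightarrow> st \<Rightarrow> real" where
  "canonical_flux h k a b =
     of_bool (S1 = k) + of_bool (a = k) - of_bool (h S1 S1 a = k) - of_bool (h S1 a b = k)"

lemma nc_tables_canonical_flux:
  "\<forall>p\<in>set nc_tables. \<forall>a b c k. of_bool (rule_of_table p a b c = k)
    = of_bool (b = k) + canonical_flux (rule_of_table p) k a b - canonical_flux (rule_of_table p) k b c"
  by (simp add: all_st nc_tables_def canonical_flux_def rule_of_table_def st_index_def)

lemma complete_nc_iff_table: "complete_nc h \<longleftrightarrow> rule_table h \<in> set nc_tables"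
proof
  assume "complete_nc h"
  then have "count_list (cyclic_image h w) k = count_list w k" if "w \<in> set short_necklaces" for w k
    using that count_list_cyclic_image by (auto simp: complete_nc_def short_necklaces_def)
  then show "rule_table h \<in> set nc_tables"
    by (simp add: rule_table_if_count_conserving)
next
  assume "rule_table h \<in> set nc_tables"
  then show "complete_nc h"
    using nc_tables_canonical_flux additive_conserved_if_flux
    by (metis complete_nc_def rule_of_table_rule_table)
qed

lemma Delta_eq_vec3: "x \<in> Delta \<Longrightarrow> x = vec3 (x S1) (x S2) (1 - x S1 - x S2)"
  by (auto simp: fun_eq_iff vec3_def Delta_def UNIV_st split: st.split)

lemma same_on_Delta_vec3I:
  assumes "\<And>x1 x2 y1 y2 z1 z2.
    f (vec3 x1 x2 (1 - x1 - x2)) (vec3 y1 y2 (1 - y1 - y2)) (vec3 z1 z2 (1 - z1 - z2))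
    = g (vec3 x1 x2 (1 - x1 - x2)) (vec3 y1 y2 (1 - y1 - y2)) (vec3 z1 z2 (1 - z1 - z2))"
  shows "same_on_Delta f g"
  unfolding same_on_Delta_def by (metis assms Delta_eq_vec3)

lemma nc_tables_listed_rules:
  "list_all2 (\<lambda>p F. same_on_Delta (local_rule (rule_of_table p)) F) nc_tables listed_rules"
  unfolding nc_tables_def listed_rules_def list_all2_Cons list_all2_Nil
  apply (intro conjI TrueI same_on_Delta_vec3I ext)
  apply (simp_all add: local_rule_def UNIV_st rule_of_table_def st_index_def vec3_def split: st.split)
  apply (safe; simp add: algebra_simps)+
  done

theorem mainTheorem4:
  shows "card {h. complete_nc h} = 15
    \<and> (\<forall>h. complete_nc h \<longrightarrow> (\<exists>F\<in>set listed_rules. same_on_Delta (local_rule h) F))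
    \<and> (\<forall>F\<in>set listed_rules. \<exists>h. complete_nc h \<and> same_on_Delta (local_rule h) F)"
proof -
  have complete_nc_iff: "complete_nc h \<longleftrightarrow> (\<exists>p\<in>set nc_tables. h = rule_of_table p)" for h
    by (metis complete_nc_iff_table rule_of_table_rule_table rule_table_rule_of_table)
  have "inj_on rule_of_table (set nc_tables)"
    by (metis inj_on_inverseI rule_table_rule_of_table)
  moreover have "{h. complete_nc h} = rule_of_table ` set nc_tables"
    by (auto simp: complete_nc_iff)
  ultimately have "card {h. complete_nc h} = 15"
    by (simp add: card_image nc_tables_def)
  moreover have "rel_set (\<lambda>p F. same_on_Delta (local_rule (rule_of_table p)) F)
      (set nc_tables) (set listed_rules)"
    using nc_tables_listed_rules list.set_transfer by (auto dest: rel_funD)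
  ultimately show ?thesis
    by (auto simp: complete_nc_iff rel_set_def) blast
qed

end
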